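(* For any fixed $\lambda > 0$ there exists $p_0(\lambda)$ such that for all primes $p \ge p_0(\lambda)$, \[ \alpha_p(\lambda) := \operatorname{Cov}_{\mu^{(p)}_\lambda}\bigl(g_p(x),\, x^2\bigr) > 0, \] where $\mu^{(p)}_\lambda$ is the probability measure on $[-1,1]$ with $\mu^{(p)}_\lambda(dx) \propto \sqrt{1-x^2}\,(1 - 2x/\sqrt{p} + 1/p)^{-\lambda}\,dx$ and $g_p(x) = -\log(1 - 2x/\sqrt{p} + 1/p)$. *)

theory Defs
  imports "HOL-Analysis.Analysis" "HOL-Computational_Algebra.Primes"
begin

definition base_p :: "nat \<Rightarrow> real \<Rightarrow> real" where
  "base_p p x = 1 - 2 * x / sqrt (real p) + 1 / real p"

definition mu_weight :: "real \<Rightarrow> nat \<Rightarrow> real \<Rightarrow> real" where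
  "mu_weight lam p x = sqrt (1 - x^2) * (base_p p x) powr (- lam)"

definition g_p :: "nat \<Rightarrow> real \<Rightarrow> real" where
  "g_p p x = - ln (base_p p x)"

definition mu_expect :: "real \<Rightarrow> nat \<Rightarrow> (real \<Rightarrow> real) \<Rightarrow> real" where
  "mu_expect lam p f =
     integral {-1..1} (\<lambda>x. f x * mu_weight lam p x) / integral {-1..1} (mu_weight lam p)"

definition alpha_p :: "real \<Rightarrow> nat \<Rightarrow> real" where
  "alpha_p lam p = mu_expect lam p (\<lambda>x. g_p p x * x^2)
                   - mu_expect lam p (g_p p) * mu_expect lam p (\<lambda>x. x^2)"

end

theory Submission
  imports Defs
begin

text \<open>
  Apart from the factor \<open>base_p p x powr (-lam) = exp (lam * g_p p x)\<close> the density of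
  mu is even, so conditioning on \<open>|x| = s\<close> replaces \<open>g_p\<close> by the two-point mean
  \<open>G s\<close> of \<open>g_p p s\<close> and \<open>g_p p (-s)\<close> with weights proportional to
  \<open>exp (lam * g_p)\<close>, and the covariance with the even function \<open>x^2\<close> becomes a
  covariance of \<open>G s\<close> and \<open>s^2\<close> for a weight on [0,1]. Writing \<open>G\<close> as
  \<open>(a + b)/2 + d * tanh (lam * d)\<close> with \<open>d = (a - b)/2\<close> shows that \<open>G\<close> is strictly
  increasing: \<open>g_p\<close> is increasing and \<open>g_p p s + g_p p (-s) = - ln ((1 + 1/p)^2 - 4 s^2/p)\<close>.
  Two strictly increasing functions are positively correlated under any weight that is positive
  inside the interval (a strict Chebyshev inequality, proved by integrating
  \<open>(G - E G) * (s^2 - c^2) \<ge> 0\<close> for a suitable threshold c). The argument works for every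
  \<open>lam \<ge> 0\<close> and every \<open>p \<ge> 2\<close>.
\<close>

lemma integral_pos_real:
  fixes h :: "real \<Rightarrow> real"
  assumes "continuous_on {a..b} h" "a < b" "\<And>x. x \<in> {a..b} \<Longrightarrow> 0 \<le> h x"
    and "x \<in> {a..b}" "0 < h x"
  shows "0 < integral {a..b} h"
proof -
  have "0 \<le> integral {a..b} h"
    using assms(1,3) by (intro integral_nonneg integrable_continuous_interval) auto
  moreover have "integral {a..b} h \<noteq> 0"
    using integral_eq_0_iff[OF assms(1-3)] assms(4,5) by auto
  ultimately show ?thesis by simp
qed

lemma mono_on_threshold:
  fixes f u :: "real \<Rightarrow> real"
  assumes f: "mono_on {a..b} f" and u: "mono_on {a..b} u" and "a \<le> b"
  obtains c where "c \<in> {a..b}" "\<And>x. x \<in> {a..b} \<Longrightarrow> 0 \<le> (f x - E) * (u x - u c)"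
proof -
  define S where "S = {x \<in> {a..b}. E \<le> f x}"
  define c where "c = (if S = {} then b else Inf S)"
  have bdd: "bdd_below S" unfolding S_def by (rule bdd_belowI[of _ a]) auto
  have c_le: "c \<le> x" if "x \<in> S" for x
    using that bdd by (auto simp: c_def intro: cInf_lower)
  have c: "c \<in> {a..b}"
  proof (cases "S = {}")
    case False
    then obtain s where "s \<in> S" by blast
    then have "c \<le> b" using c_le[of s] by (auto simp: S_def)
    moreover have "a \<le> c" using False by (auto simp: c_def S_def intro: cInf_greatest)
    ultimately show ?thesis by simp
  qed (use \<open>a \<le> b\<close> in \<open>simp add: c_def\<close>)
  have "0 \<le> (f x - E) * (u x - u c)" if x: "x \<in> {a..b}" for x
  proof (cases "E \<le> f x")
    case True
    then have "u c \<le> u x" using c x c_le[of x] by (intro mono_onD[OF u]) (auto simp: S_def)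
    with True show ?thesis by simp
  next
    case False
    have "x \<le> c"
    proof (rule ccontr)
      assume "\<not> x \<le> c"
      then have "S \<noteq> {}" and "Inf S < x" using x by (auto simp: c_def split: if_splits)
      then obtain y where "y \<in> S" "y < x" using cInf_less_iff[OF _ bdd] by auto
      then have "f y \<le> f x" using x by (intro mono_onD[OF f]) (auto simp: S_def)
      with False \<open>y \<in> S\<close> show False by (auto simp: S_def)
    qed
    then have "u x \<le> u c" using c x by (intro mono_onD[OF u]) auto
    with False show ?thesis by (intro mult_nonpos_nonpos) auto
  qed
  with c that show ?thesis by blast
qed

theorem weighted_chebyshev_strict:
  fixes f u w :: "real \<Rightarrow> real"
  assumes "a < b"
    and cont: "continuous_on {a..b} f" "continuous_on {a..b} u" "continuous_on {a..b} w"
    and w_nonneg: "\<And>x. x \<in> {a..b} \<Longrightarrow> 0 \<le> w x"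
    and w_pos: "\<And>x. x \<in> {a<..<b} \<Longrightarrow> 0 < w x"
    and f: "strict_mono_on {a..b} f" and u: "strict_mono_on {a..b} u"
  shows "integral {a..b} (\<lambda>x. f x * w x) / integral {a..b} w
           * (integral {a..b} (\<lambda>x. u x * w x) / integral {a..b} w)
         < integral {a..b} (\<lambda>x. f x * u x * w x) / integral {a..b} w"
proof -
  define Z where "Z = integral {a..b} w"
  define E where "E = integral {a..b} (\<lambda>x. f x * w x) / Z"
  have "(a + b) / 2 \<in> {a<..<b}" using \<open>a < b\<close> by simp
  then have "0 < Z"
    unfolding Z_def using assms by (intro integral_pos_real[of _ _ _ "(a + b) / 2"]) auto
  obtain c where "c \<in> {a..b}" and c: "\<And>x. x \<in> {a..b} \<Longrightarrow> 0 \<le> (f x - E) * (u x - u c)"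
    using mono_on_threshold[OF strict_mono_on_imp_mono_on[OF f] strict_mono_on_imp_mono_on[OF u]]
      \<open>a < b\<close> by (metis less_imp_le)
  define h where "h x = (f x - E) * (u x - u c) * w x" for x
  have h_cont: "continuous_on {a..b} h"
    unfolding h_def using cont by (intro continuous_intros)
  have "integral {a..b} h = integral {a..b} (\<lambda>x. f x * u x * w x)
      - E * integral {a..b} (\<lambda>x. u x * w x) - u c * (integral {a..b} (\<lambda>x. f x * w x) - E * Z)"
  proof -
    have "h = (\<lambda>x. (f x * u x * w x - E * (u x * w x)) - u c * (f x * w x - E * w x))"
      by (auto simp: h_def algebra_simps)
    moreover have "(\<lambda>x. f x * u x * w x) integrable_on {a..b}" "(\<lambda>x. u x * w x) integrable_on {a..b}"
      "(\<lambda>x. f x * w x) integrable_on {a..b}" "w integrable_on {a..b}"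
      using cont by (auto intro!: integrable_continuous_interval continuous_intros)
    ultimately show ?thesis
      by (simp add: Z_def integral_diff integrable_diff integrable_on_mult_right)
  qed
  also have "\<dots> = integral {a..b} (\<lambda>x. f x * u x * w x) - E * integral {a..b} (\<lambda>x. u x * w x)"
    using \<open>0 < Z\<close> by (simp add: E_def)
  finally have h_eq: "integral {a..b} h = \<dots>" .
  have "finite ((f -` {E} \<inter> {a..b}) \<union> (u -` {u c} \<inter> {a..b}))"
    using f u by (auto intro!: finite_vimage_IntI strict_mono_on_imp_inj_on)
  then obtain x where x: "x \<in> {a<..<b}" "x \<notin> (f -` {E} \<inter> {a..b}) \<union> (u -` {u c} \<inter> {a..b})"
    using infinite_Ioo[OF \<open>a < b\<close>] by (meson finite_subset subsetI)
  have "0 < h x"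
  proof -
    have "0 \<le> (f x - E) * (u x - u c)" and "(f x - E) * (u x - u c) \<noteq> 0"
      using x c by auto
    then show ?thesis using w_pos[OF x(1)] unfolding h_def by (simp add: order_le_less)
  qed
  then have "0 < integral {a..b} h"
    using x h_cont c w_nonneg \<open>a < b\<close>
    by (intro integral_pos_real[of _ _ _ x]) (auto simp: h_def)
  with h_eq \<open>0 < Z\<close> show ?thesis
    by (simp add: Z_def[symmetric] E_def[symmetric] divide_strict_right_mono)
qed

lemma integral_fold_symmetric:
  fixes f :: "real \<Rightarrow> real"
  assumes "f integrable_on {-a..a}" "0 \<le> a"
  shows "integral {-a..a} f = integral {0..a} (\<lambda>x. f x + f (-x))"
proof -
  have "f integrable_on {-a..0}" "f integrable_on {0..a}"
    using assms by (auto intro: integrable_subinterval_real)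
  moreover have "(\<lambda>x. f (-x)) integrable_on {0..a}"
    using \<open>f integrable_on {-a..0}\<close>
      Henstock_Kurzweil_Integration.integrable_reflect_real[where a="-a" and b=0 and f=f] by simp
  moreover have "integral {0..a} (\<lambda>x. f (-x)) = integral {-a..0} f"
    using Henstock_Kurzweil_Integration.integral_reflect_real[where a="-a" and b=0 and f=f] by simp
  ultimately show ?thesis
    using Henstock_Kurzweil_Integration.integral_combine[of "-a" 0 a f] assms
    by (simp add: integral_add)
qed

lemma continuous_on_reflect_symmetric:
  fixes f :: "real \<Rightarrow> real"
  assumes "continuous_on {-a..a} f"
  shows "continuous_on {-a..a} (\<lambda>x. f (-x))"
  by (rule continuous_on_compose2[OF assms continuous_on_minus[OF continuous_on_id]]) auto

definition exp_tilted_mean :: "real \<Rightarrow> real \<Rightarrow> real \<Rightarrow> real" where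
  "exp_tilted_mean lam a b =
     (a * exp (lam * a) + b * exp (lam * b)) / (exp (lam * a) + exp (lam * b))"

lemma exp_tilted_mean_tanh:
  "exp_tilted_mean lam a b = (a + b) / 2 + (a - b) / 2 * tanh (lam * ((a - b) / 2))"
proof -
  define y where "y = lam * ((a - b) / 2)"
  define m where "m = exp (lam * ((a + b) / 2))"
  have "lam * a = lam * ((a + b) / 2) + y" "lam * b = lam * ((a + b) / 2) + - y"
    by (simp_all add: y_def field_simps)
  then have "exp (lam * a) = m * exp y" "exp (lam * b) = m * exp (- y)"
    unfolding m_def by (metis exp_add)+
  moreover have "0 < m" "0 < exp y + exp (- y)" by (simp_all add: m_def add_pos_pos)
  ultimately have
    "exp_tilted_mean lam a b = (m * (a * exp y + b * exp (- y))) / (m * (exp y + exp (- y)))"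
    unfolding exp_tilted_mean_def by (simp add: algebra_simps)
  also have "\<dots> = (a * exp y + b * exp (- y)) / (exp y + exp (- y))"
    using \<open>0 < m\<close> by simp
  also have "\<dots> = (a + b) / 2 + (a - b) / 2 * ((exp y - exp (- y)) / (exp y + exp (- y)))"
    using \<open>0 < exp y + exp (- y)\<close> by (simp add: field_simps)
  finally show ?thesis by (simp add: tanh_altdef y_def)
qed

lemma exp_tilted_mean_strict_mono:
  assumes "0 \<le> lam" "a + b < a' + b'" "0 \<le> a - b" "a - b \<le> a' - b'"
  shows "exp_tilted_mean lam a b < exp_tilted_mean lam a' b'"
proof -
  have "tanh (lam * ((a - b) / 2)) \<le> tanh (lam * ((a' - b') / 2))"
    using assms by (simp add: mult_left_mono)
  then have "(a - b) / 2 * tanh (lam * ((a - b) / 2))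
      \<le> (a' - b') / 2 * tanh (lam * ((a' - b') / 2))"
    using assms by (intro mult_mono) auto
  moreover have "(a + b) / 2 < (a' + b') / 2" using assms(2) by simp
  ultimately show ?thesis unfolding exp_tilted_mean_tanh by (rule add_less_le_mono[rotated])
qed

lemma base_p_eq_square_plus:
  assumes "0 < p"
  shows "base_p p x = (1 - 1 / sqrt (real p))^2 + 2 * (1 - x) / sqrt (real p)"
  using assms by (simp add: base_p_def power2_eq_square field_simps)

lemma base_p_pos:
  assumes "1 < p" "x \<le> 1"
  shows "0 < base_p p x"
proof -
  have "1 / sqrt (real p) \<noteq> 1" using assms by simp
  then have "0 < (1 - 1 / sqrt (real p))^2" by simp
  moreover have "0 \<le> 2 * (1 - x) / sqrt (real p)" using assms by simp
  moreover have "0 < p" using assms by simp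
  ultimately show ?thesis unfolding base_p_eq_square_plus[OF \<open>0 < p\<close>] by (intro add_pos_nonneg)
qed

lemma base_p_strict_antimono:
  assumes "0 < p" "x < y"
  shows "base_p p y < base_p p x"
  using assms by (simp add: base_p_def divide_strict_right_mono)

lemma base_p_mult_reflect:
  assumes "0 < p"
  shows "base_p p x * base_p p (-x) = (1 + 1 / real p)^2 - 4 * x^2 / real p"
  using assms by (simp add: base_p_def power2_eq_square field_simps)

lemma g_p_strict_mono:
  assumes "1 < p" "x < y" "y \<le> 1"
  shows "g_p p x < g_p p y"
  using base_p_strict_antimono[of p x y] base_p_pos[of p y] assms by (simp add: g_p_def)

lemma g_p_even_part_strict_mono:
  assumes "1 < p" "0 \<le> s" "s < t" "t \<le> 1"
  shows "g_p p s + g_p p (-s) < g_p p t + g_p p (-t)"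
proof -
  have sum: "g_p p x + g_p p (-x) = - ln ((1 + 1 / real p)^2 - 4 * x^2 / real p)"
    if "\<bar>x\<bar> \<le> 1" for x
  proof -
    have "0 < base_p p x" "0 < base_p p (-x)" using that assms(1) by (auto intro: base_p_pos)
    then have "g_p p x + g_p p (-x) = - ln (base_p p x * base_p p (-x))"
      by (simp add: g_p_def ln_mult)
    then show ?thesis using assms(1) by (simp add: base_p_mult_reflect)
  qed
  have "s^2 < t^2" using assms by (simp add: power_strict_mono)
  then have "4 * s^2 / real p < 4 * t^2 / real p" using assms by (simp add: divide_strict_right_mono)
  moreover have "0 < (1 + 1 / real p)^2 - 4 * t^2 / real p"
    using base_p_pos[of p t] base_p_pos[of p "-t"] assms by (simp add: base_p_mult_reflect[symmetric])
  ultimately show ?thesis using assms by (simp add: sum)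
qed

lemma continuous_on_g_p:
  assumes "1 < p"
  shows "continuous_on {-1..1} (g_p p)"
proof -
  have "\<forall>x\<in>{-1..1}. base_p p x \<noteq> 0" using base_p_pos[OF assms] by force
  then show ?thesis unfolding g_p_def base_p_def using assms by (intro continuous_intros) auto
qed

lemma mu_weight_eq_exp:
  assumes "1 < p" "x \<le> 1"
  shows "mu_weight lam p x = sqrt (1 - x^2) * exp (lam * g_p p x)"
  using base_p_pos[OF assms] by (simp add: mu_weight_def g_p_def powr_def)

lemma continuous_on_mu_weight:
  assumes "1 < p"
  shows "continuous_on {-1..1} (mu_weight lam p)"
proof -
  have "continuous_on {-1..1} (\<lambda>x. sqrt (1 - x^2) * exp (lam * g_p p x))"
    using continuous_on_g_p[OF assms] by (intro continuous_intros)
  then show ?thesis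
    by (rule continuous_on_cong[THEN iffD1, rotated 2]) (auto simp: mu_weight_eq_exp[OF assms])
qed

lemma mu_weight_nonneg:
  assumes "\<bar>x\<bar> \<le> 1"
  shows "0 \<le> mu_weight lam p x"
  using assms abs_square_le_1[of x] by (simp add: mu_weight_def)

lemma mu_weight_pos:
  assumes "1 < p" "\<bar>x\<bar> < 1"
  shows "0 < mu_weight lam p x"
proof -
  have "0 < base_p p x" using assms by (intro base_p_pos) auto
  then show ?thesis using assms abs_square_less_1[of x] by (simp add: mu_weight_def)
qed

definition folded_weight :: "real \<Rightarrow> nat \<Rightarrow> real \<Rightarrow> real" where
  "folded_weight lam p s = mu_weight lam p s + mu_weight lam p (-s)"

text \<open>The conditional expectation of \<open>g_p\<close> given \<open>|x| = s\<close> under mu.\<close>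

definition cond_mean_g_p :: "real \<Rightarrow> nat \<Rightarrow> real \<Rightarrow> real" where
  "cond_mean_g_p lam p s = exp_tilted_mean lam (g_p p s) (g_p p (-s))"

lemma g_p_mu_weight_fold:
  assumes "1 < p" "\<bar>s\<bar> \<le> 1"
  shows "g_p p s * mu_weight lam p s + g_p p (-s) * mu_weight lam p (-s)
           = cond_mean_g_p lam p s * folded_weight lam p s"
proof -
  have "0 < exp (lam * g_p p s) + exp (lam * g_p p (-s))" by (simp add: add_pos_pos)
  then show ?thesis using assms
    by (simp add: folded_weight_def cond_mean_g_p_def exp_tilted_mean_def mu_weight_eq_exp
        field_simps)
qed

lemma cond_mean_g_p_strict_mono:
  assumes "1 < p" "0 \<le> lam"
  shows "strict_mono_on {0..1} (cond_mean_g_p lam p)"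
proof (rule strict_mono_onI)
  fix s t :: real
  assume "s \<in> {0..1}" "t \<in> {0..1}" "s < t"
  then have "g_p p (-s) \<le> g_p p s" "g_p p s < g_p p t" "g_p p (-t) < g_p p (-s)"
    using g_p_strict_mono[OF assms(1)] by (auto simp: order_le_less)
  with g_p_even_part_strict_mono[OF assms(1)] \<open>s \<in> {0..1}\<close> \<open>t \<in> {0..1}\<close> \<open>s < t\<close> assms(2)
  show "cond_mean_g_p lam p s < cond_mean_g_p lam p t"
    unfolding cond_mean_g_p_def by (intro exp_tilted_mean_strict_mono) auto
qed

lemma continuous_on_folded_weight:
  assumes "1 < p"
  shows "continuous_on {-1..1} (folded_weight lam p)"
proof -
  note w = continuous_on_mu_weight[OF assms]
  show ?thesis
    unfolding folded_weight_def using continuous_on_add[OF w continuous_on_reflect_symmetric[OF w]] .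
qed

lemma continuous_on_cond_mean_g_p:
  assumes "1 < p"
  shows "continuous_on {-1..1} (cond_mean_g_p lam p)"
proof -
  note g = continuous_on_g_p[OF assms]
  have "exp (lam * g_p p s) + exp (lam * g_p p (-s)) \<noteq> 0" for s
    by (metis add_pos_pos exp_gt_zero order_less_irrefl)
  with g continuous_on_reflect_symmetric[OF g] show ?thesis
    unfolding cond_mean_g_p_def exp_tilted_mean_def by (intro continuous_intros) auto
qed

lemma alpha_p_folded:
  assumes "1 < p"
  shows "alpha_p lam p =
    integral {0..1} (\<lambda>s. cond_mean_g_p lam p s * s^2 * folded_weight lam p s)
      / integral {0..1} (folded_weight lam p)
    - integral {0..1} (\<lambda>s. cond_mean_g_p lam p s * folded_weight lam p s)
      / integral {0..1} (folded_weight lam p)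
      * (integral {0..1} (\<lambda>s. s^2 * folded_weight lam p s) / integral {0..1} (folded_weight lam p))"
proof -
  note cont = continuous_on_mu_weight[OF assms] continuous_on_g_p[OF assms]
  have fold: "integral {-1..1} F = integral {0..1} (\<lambda>s. F s + F (-s))"
    if "continuous_on {-1..1} F" for F :: "real \<Rightarrow> real"
    using integral_fold_symmetric[of F 1] integrable_continuous_interval[OF that] by simp
  have fold_cong: "integral {-1..1} F = integral {0..1} G"
    if "continuous_on {-1..1} F" "\<And>s. s \<in> {0..1} \<Longrightarrow> F s + F (-s) = G s" for F G :: "real \<Rightarrow> real"
    unfolding fold[OF that(1)] by (rule integral_cong) (use that(2) in auto)
  have "integral {-1..1} (mu_weight lam p) = integral {0..1} (folded_weight lam p)"
    using cont by (intro fold_cong) (auto simp: folded_weight_def)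
  moreover have "integral {-1..1} (\<lambda>x. x^2 * mu_weight lam p x)
      = integral {0..1} (\<lambda>s. s^2 * folded_weight lam p s)"
    using cont by (intro fold_cong continuous_intros) (auto simp: folded_weight_def algebra_simps)
  moreover have "integral {-1..1} (\<lambda>x. g_p p x * mu_weight lam p x)
      = integral {0..1} (\<lambda>s. cond_mean_g_p lam p s * folded_weight lam p s)"
    using cont assms by (intro fold_cong continuous_intros) (auto simp: g_p_mu_weight_fold)
  moreover have "integral {-1..1} (\<lambda>x. g_p p x * x^2 * mu_weight lam p x)
      = integral {0..1} (\<lambda>s. cond_mean_g_p lam p s * s^2 * folded_weight lam p s)"
  proof (intro fold_cong)
    fix s :: real assume "s \<in> {0..1}"
    have "g_p p s * s^2 * mu_weight lam p s + g_p p (-s) * (-s)^2 * mu_weight lam p (-s)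
        = s^2 * (g_p p s * mu_weight lam p s + g_p p (-s) * mu_weight lam p (-s))"
      by (simp add: algebra_simps)
    also have "\<dots> = cond_mean_g_p lam p s * s^2 * folded_weight lam p s"
      using \<open>s \<in> {0..1}\<close> by (simp add: g_p_mu_weight_fold[OF assms])
    finally show "g_p p s * s^2 * mu_weight lam p s + g_p p (-s) * (-s)^2 * mu_weight lam p (-s)
        = cond_mean_g_p lam p s * s^2 * folded_weight lam p s" .
  qed (use cont in \<open>intro continuous_intros\<close>)
  ultimately show ?thesis by (simp add: alpha_p_def mu_expect_def)
qed

theorem theoremA4:
  fixes lam :: real
  assumes "lam > 0"
  shows "\<exists>p0::nat. \<forall>p::nat. prime p \<and> p \<ge> p0 \<longrightarrow> alpha_p lam p > 0"
proof (intro exI[of _ 2] allI impI)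
  fix p :: nat
  assume "prime p \<and> 2 \<le> p"
  then have p: "1 < p" by simp
  have G_cont: "continuous_on {0..1} (cond_mean_g_p lam p)"
    and W_cont: "continuous_on {0..1} (folded_weight lam p)"
    using continuous_on_subset[OF continuous_on_cond_mean_g_p[OF p]]
      continuous_on_subset[OF continuous_on_folded_weight[OF p]] by auto
  have sq_cont: "continuous_on {0..1} (\<lambda>s::real. s^2)"
    by (intro continuous_intros)
  have sq_mono: "strict_mono_on {0..1::real} (\<lambda>s. s^2)"
    by (rule strict_mono_onI) (auto intro: power_strict_mono)
  have W_nonneg: "0 \<le> folded_weight lam p s" if "s \<in> {0..1}" for s
    using that by (simp add: folded_weight_def mu_weight_nonneg)
  have W_pos: "0 < folded_weight lam p s" if "s \<in> {0<..<1}" for s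
    using that p by (simp add: folded_weight_def mu_weight_pos add_pos_pos)
  from weighted_chebyshev_strict[OF zero_less_one G_cont sq_cont W_cont W_nonneg W_pos
      cond_mean_g_p_strict_mono[OF p] sq_mono] assms
  show "alpha_p lam p > 0" unfolding alpha_p_folded[OF p] by simp
qed

end
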